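(* Let $G$ be a group satisfying the property $\mathsf{FM}$ and $\nu$ a conjugation-invariant pseudo-norm on $G$. Then for any elements $\mathsf{f},\mathsf{g}$ of $A_\nu$, $\mathsf{f}+\mathsf{g}=\mathsf{g}+\mathsf{f}$.
   Context: A conjugation-invariant pseudo-norm on a group $G$ is a function $\nu\colon G\to\mathbb{R}_{\ge0}$ with $\nu(1)=0$, $\nu(f)=\nu(f^{-1})$, $\nu(fg)\le\nu(f)+\nu(g)$ and $\nu(gfg^{-1})=\nu(f)$ for all $f,g\in G$. Property $\mathsf{FM}$: for a subgroup $H\le G$, let $\nu_H(f)$ be the minimal $k$ such that $f=g_1h_1g_1^{-1}\cdots g_kh_kg_k^{-1}$ ($g_i\in G,h_i\in H$), $\infty$ if none; for $K\subset G$ let $\mathrm{D}^f_H(K)$ be the set of $h_0\in G$ such that for all $g_1,\dots,g_k\in G$ there is $h\in G$ with every element of $hh_0h^{-1}K(hh_0h^{-1})^{-1}$ commuting with every element of $\bigcup_i g_iHg_i^{-1}$. $(G,H)$ satisfies $\mathsf{FM}$ if $\nu_H<\infty$ on $G$ and $\mathrm{D}^f_H(h_1Hh_1^{-1}\cup\dots\cup h_kHh_k^{-1})\ne\emptyset$ for all $h_1,\dots,h_k\in G$; $G$ satisfies $\mathsf{FM}$ if some $(G,H)$ does. $A_G=\coprod_{k\ge0}(G\times\mathbb{R})^k$, elements written as formal words $g_1^{s_1}\cdots g_k^{s_k}$, empty word $1$; $\mathtt{g}\cdot\mathtt{h}$ is concatenation, $\bar{\mathtt{g}}=g_k^{-s_k}\cdots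 g_1^{-s_1}$; $\|\mathtt{g}\|_\nu=\lim_{n\to\infty}\frac1n\nu(g_1^{[s_1n]}\cdots g_k^{[s_kn]})$ ($[\cdot]$ integer part), $\|1\|_\nu=0$; $\mathtt{g}\sim\mathtt{h}$ iff $\|\mathtt{g}\cdot\bar{\mathtt{h}}\|_\nu=0$; $A_\nu=A_G/\sim$ with addition $[\mathtt{g}]+[\mathtt{h}]=[\mathtt{g}\cdot\mathtt{h}]$. *)

theory Defs
  imports "HOL-Algebra.Algebra" "HOL-Library.Extended_Nat" Complex_Main
begin

definition conj_inv_pseudo_norm :: "('a, 'b) monoid_scheme \<Rightarrow> ('a \<Rightarrow> real) \<Rightarrow> bool" where
  "conj_inv_pseudo_norm G \<nu> \<longleftrightarrow>
     (\<forall>f\<in>carrier G. \<nu> f \<ge> 0) \<and>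
     \<nu> \<one>\<^bsub>G\<^esub> = 0 \<and>
     (\<forall>f\<in>carrier G. \<nu> f = \<nu> (inv\<^bsub>G\<^esub> f)) \<and>
     (\<forall>f\<in>carrier G. \<forall>g\<in>carrier G. \<nu> (f \<otimes>\<^bsub>G\<^esub> g) \<le> \<nu> f + \<nu> g) \<and>
     (\<forall>f\<in>carrier G. \<forall>g\<in>carrier G. \<nu> (g \<otimes>\<^bsub>G\<^esub> f \<otimes>\<^bsub>G\<^esub> inv\<^bsub>G\<^esub> g) = \<nu> f)"

definition conj_prod :: "('a, 'b) monoid_scheme \<Rightarrow> ('a \<times> 'a) list \<Rightarrow> 'a" where
  "conj_prod G ps = foldr (\<lambda>(g, h) acc. g \<otimes>\<^bsub>G\<^esub> h \<otimes>\<^bsub>G\<^esub> inv\<^bsub>G\<^esub> g \<otimes>\<^bsub>G\<^esub> acc) ps \<one>\<^bsub>G\<^esub>"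

text \<open>nu_H(f): minimal number of conjugates of elements of H whose product is f (infinity if none).\<close>
definition nu_H :: "('a, 'b) monoid_scheme \<Rightarrow> 'a set \<Rightarrow> 'a \<Rightarrow> enat" where
  "nu_H G H f = Inf {enat (length ps) | ps.
      (\<forall>(g, h)\<in>set ps. g \<in> carrier G \<and> h \<in> H) \<and> f = conj_prod G ps}"

definition conjset :: "('a, 'b) monoid_scheme \<Rightarrow> 'a \<Rightarrow> 'a set \<Rightarrow> 'a set" where
  "conjset G g K = (\<lambda>x. g \<otimes>\<^bsub>G\<^esub> x \<otimes>\<^bsub>G\<^esub> inv\<^bsub>G\<^esub> g) ` K"

definition Df_H :: "('a, 'b) monoid_scheme \<Rightarrow> 'a set \<Rightarrow> 'a set \<Rightarrow> 'a set" where
  "Df_H G H K = {h0 \<in> carrier G. \<forall>gs. set gs \<subseteq> carrier G \<longrightarrow>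
      (\<exists>h\<in>carrier G.
         \<forall>x\<in>conjset G (h \<otimes>\<^bsub>G\<^esub> h0 \<otimes>\<^bsub>G\<^esub> inv\<^bsub>G\<^esub> h) K.
         \<forall>y\<in>(\<Union>g\<in>set gs. conjset G g H). x \<otimes>\<^bsub>G\<^esub> y = y \<otimes>\<^bsub>G\<^esub> x)}"

definition FM_pair :: "('a, 'b) monoid_scheme \<Rightarrow> 'a set \<Rightarrow> bool" where
  "FM_pair G H \<longleftrightarrow> subgroup H G \<and>
     (\<forall>f\<in>carrier G. nu_H G H f < \<infinity>) \<and>
     (\<forall>hs. set hs \<subseteq> carrier G \<longrightarrow> Df_H G H (\<Union>h\<in>set hs. conjset G h H) \<noteq> {})"

definition FM :: "('a, 'b) monoid_scheme \<Rightarrow> bool" where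
  "FM G \<longleftrightarrow> (\<exists>H. FM_pair G H)"

definition words :: "('a, 'b) monoid_scheme \<Rightarrow> ('a \<times> real) list set" where
  "words G = {w. \<forall>(g, s)\<in>set w. g \<in> carrier G}"

definition word_eval :: "('a, 'b) monoid_scheme \<Rightarrow> ('a \<times> real) list \<Rightarrow> nat \<Rightarrow> 'a" where
  "word_eval G w n = foldr (\<lambda>(g, s) acc. (g [^]\<^bsub>G\<^esub> (\<lfloor>s * real n\<rfloor>)) \<otimes>\<^bsub>G\<^esub> acc) w \<one>\<^bsub>G\<^esub>"

definition word_bar :: "('a \<times> real) list \<Rightarrow> ('a \<times> real) list" where
  "word_bar w = rev (map (\<lambda>(g, s). (g, - s)) w)"

definition word_norm :: "('a, 'b) monoid_scheme \<Rightarrow> ('a \<Rightarrow> real) \<Rightarrow> ('a \<times> real) list \<Rightarrow> real" where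
  "word_norm G \<nu> w = lim (\<lambda>n. \<nu> (word_eval G w n) / real n)"

definition word_sim :: "('a, 'b) monoid_scheme \<Rightarrow> ('a \<Rightarrow> real) \<Rightarrow> ('a \<times> real) list \<Rightarrow> ('a \<times> real) list \<Rightarrow> bool" where
  "word_sim G \<nu> v w \<longleftrightarrow> word_norm G \<nu> (v @ word_bar w) = 0"

text \<open>The element [w] of A_nu = A_G / ~ ; addition is [v] + [w] = [v @ w].\<close>
definition A_class :: "('a, 'b) monoid_scheme \<Rightarrow> ('a \<Rightarrow> real) \<Rightarrow> ('a \<times> real) list \<Rightarrow> ('a \<times> real) list set" where
  "A_class G \<nu> w = {v \<in> words G. word_sim G \<nu> w v}"

end

theory Submission
  imports Defs
begin

text \<open>
  Let \<open>A\<close> be the finite set of letters occurring in \<open>f\<close> and \<open>g\<close>. Writing each letter as a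
  product of conjugates of \<open>H\<close> shows that \<open>\<langle>A\<rangle>\<close> lies in the subgroup \<open>\<langle>S\<rangle>\<close> generated by
  finitely many conjugates of \<open>H\<close>, and property \<open>FM\<close> yields a \<open>\<phi>\<close> such that \<open>\<phi> S \<phi>\<inverse>\<close>, hence
  \<open>\<phi> \<langle>S\<rangle> \<phi>\<inverse>\<close>, commutes with \<open>\<langle>S\<rangle>\<close>. This bounds \<open>\<nu>\<close> on all commutators of elements of
  \<open>\<langle>A\<rangle>\<close> by \<open>4 \<nu>(\<phi>)\<close>. The evaluations of \<open>f g w\<close> and \<open>g f w\<close> at time \<open>n\<close> differ by such a
  commutator, so their norms differ by a bounded amount, which disappears after dividing by \<open>n\<close>.
\<close>

definition commutator :: "('a, 'b) monoid_scheme \<Rightarrow> 'a \<Rightarrow> 'a \<Rightarrow> 'a" where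
  "commutator G x y = x \<otimes>\<^bsub>G\<^esub> y \<otimes>\<^bsub>G\<^esub> inv\<^bsub>G\<^esub> x \<otimes>\<^bsub>G\<^esub> inv\<^bsub>G\<^esub> y"

definition centralizer :: "('a, 'b) monoid_scheme \<Rightarrow> 'a set \<Rightarrow> 'a set" where
  "centralizer G A = {z \<in> carrier G. \<forall>x\<in>A. z \<otimes>\<^bsub>G\<^esub> x = x \<otimes>\<^bsub>G\<^esub> z}"

lemma words_Nil [simp]: "[] \<in> words G"
  by (simp add: words_def)

lemma words_Cons [simp]: "(g, s) # w \<in> words G \<longleftrightarrow> g \<in> carrier G \<and> w \<in> words G"
  by (auto simp: words_def)

lemma words_append: "v \<in> words G \<Longrightarrow> w \<in> words G \<Longrightarrow> v @ w \<in> words G"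
  by (auto simp: words_def)

lemma words_bar: "w \<in> words G \<Longrightarrow> word_bar w \<in> words G"
  by (auto simp: words_def word_bar_def)

lemma word_eval_Nil [simp]: "word_eval G [] n = \<one>\<^bsub>G\<^esub>"
  by (simp add: word_eval_def)

lemma word_eval_Cons [simp]:
  "word_eval G ((g, s) # w) n = g [^]\<^bsub>G\<^esub> \<lfloor>s * real n\<rfloor> \<otimes>\<^bsub>G\<^esub> word_eval G w n"
  by (simp add: word_eval_def)

lemma conj_prod_Nil [simp]: "conj_prod G [] = \<one>\<^bsub>G\<^esub>"
  by (simp add: conj_prod_def)

lemma conj_prod_Cons [simp]:
  "conj_prod G ((g, h) # ps) = g \<otimes>\<^bsub>G\<^esub> h \<otimes>\<^bsub>G\<^esub> inv\<^bsub>G\<^esub> g \<otimes>\<^bsub>G\<^esub> conj_prod G ps"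
  by (simp add: conj_prod_def)

lemma nu_H_finite_conj_prod:
  assumes "nu_H G H x < \<infinity>"
  shows "\<exists>ps. (\<forall>(g, h)\<in>set ps. g \<in> carrier G \<and> h \<in> H) \<and> x = conj_prod G ps"
proof (rule ccontr)
  assume "\<not> ?thesis"
  then have "nu_H G H x = Inf {}" unfolding nu_H_def by (intro arg_cong [where f = Inf]) blast
  with assms show False by (simp add: top_enat_def)
qed

lemma centralizer_sym:
  "A \<subseteq> carrier G \<Longrightarrow> B \<subseteq> carrier G \<Longrightarrow> A \<subseteq> centralizer G B \<longleftrightarrow> B \<subseteq> centralizer G A"
  by (auto simp: centralizer_def)

lemma lim_div_real_eq_of_bounded_diff:
  fixes u w :: "nat \<Rightarrow> real"
  assumes "\<And>n. \<bar>u n - w n\<bar> \<le> C"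
  shows "lim (\<lambda>n. u n / real n) = lim (\<lambda>n. w n / real n)"
proof -
  have "\<bar>C\<bar> = C" using abs_ge_zero[of "u 0 - w 0"] assms[of 0] by linarith
  with assms have "\<forall>\<^sub>F n in sequentially. norm (u n / real n - w n / real n) \<le> norm (C / real n) * 1"
    by (intro always_eventually allI)
      (simp add: diff_divide_distrib [symmetric] divide_right_mono)
  from tendsto_0_le [OF lim_const_over_n this]
  have diff: "(\<lambda>n. u n / real n - w n / real n) \<longlonglongrightarrow> 0" .
  have "(\<lambda>n. u n / real n) \<longlonglongrightarrow> L \<longleftrightarrow> (\<lambda>n. w n / real n) \<longlonglongrightarrow> L" for L
    using tendsto_diff [OF _ diff, of "\<lambda>n. u n / real n" L]
      tendsto_add [OF _ diff, of "\<lambda>n. w n / real n" L] by auto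
  then show ?thesis by (simp add: lim_def)
qed

context group
begin

lemma word_eval_closed: "w \<in> words G \<Longrightarrow> word_eval G w n \<in> carrier G"
proof (induction w)
  case (Cons p w)
  then show ?case by (cases p) simp
qed simp

lemma word_eval_append:
  assumes "v \<in> words G" "w \<in> words G"
  shows "word_eval G (v @ w) n = word_eval G v n \<otimes> word_eval G w n"
  using assms(1)
proof (induction v)
  case (Cons p v)
  then show ?case by (cases p) (simp add: word_eval_closed[OF assms(2)] word_eval_closed m_assoc)
qed (simp add: word_eval_closed[OF assms(2)])

lemma word_eval_in_subgroup:
  assumes "subgroup K G" "fst ` set w \<subseteq> K"
  shows "word_eval G w n \<in> K"
  using assms(2)
proof (induction w)
  case (Cons p w)
  then show ?case
    by (cases p) (simp add: subgroup.m_closed[OF assms(1)] subgroup_int_pow_closed[OF assms(1)])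
qed (simp add: subgroup.one_closed[OF assms(1)])

lemma subgroup_centralizer:
  assumes "A \<subseteq> carrier G"
  shows "subgroup (centralizer G A) G"
proof (rule subgroupI)
  fix z assume z: "z \<in> centralizer G A"
  have "inv z \<otimes> x = x \<otimes> inv z" if x: "x \<in> A" for x
  proof -
    have zx: "z \<otimes> x = x \<otimes> z" and zc: "z \<in> carrier G" and xc: "x \<in> carrier G"
      using z x assms by (auto simp: centralizer_def)
    have "x \<otimes> inv z = inv z \<otimes> (z \<otimes> x) \<otimes> inv z" using zc xc by (simp flip: m_assoc)
    also have "\<dots> = inv z \<otimes> x" using zc xc by (simp add: zx m_assoc)
    finally show ?thesis by (rule sym)
  qed
  then show "inv z \<in> centralizer G A" using z by (simp add: centralizer_def)
next
  fix y z assume y: "y \<in> centralizer G A" and z: "z \<in> centralizer G A"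
  have "y \<otimes> z \<otimes> x = x \<otimes> (y \<otimes> z)" if x: "x \<in> A" for x
  proof -
    have yx: "y \<otimes> x = x \<otimes> y" and zx: "z \<otimes> x = x \<otimes> z"
      and yc: "y \<in> carrier G" and zc: "z \<in> carrier G" and xc: "x \<in> carrier G"
      using y z x assms by (auto simp: centralizer_def)
    have "y \<otimes> z \<otimes> x = y \<otimes> (x \<otimes> z)" using yc zc xc by (simp add: zx m_assoc)
    also have "\<dots> = x \<otimes> (y \<otimes> z)" using yc zc xc by (simp add: yx flip: m_assoc)
    finally show ?thesis .
  qed
  then show "y \<otimes> z \<in> centralizer G A" using y z by (simp add: centralizer_def)
qed (use assms in \<open>auto simp: centralizer_def subsetD intro!: exI [of _ \<one>]\<close>)

lemma generate_subset_centralizer_generate: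
  assumes A: "A \<subseteq> carrier G" and B: "B \<subseteq> carrier G" and AB: "A \<subseteq> centralizer G B"
  shows "generate G A \<subseteq> centralizer G (generate G B)"
proof -
  have gA: "generate G A \<subseteq> carrier G" using generate_incl[OF A] .
  have "generate G A \<subseteq> centralizer G B"
    using generate_subgroup_incl[OF AB subgroup_centralizer[OF B]] .
  then have "B \<subseteq> centralizer G (generate G A)" using centralizer_sym[OF gA B] by blast
  then have "generate G B \<subseteq> centralizer G (generate G A)"
    using generate_subgroup_incl subgroup_centralizer[OF gA] by blast
  then show ?thesis using centralizer_sym[OF gA generate_incl[OF B]] by blast
qed

lemma conj_hom: "\<phi> \<in> carrier G \<Longrightarrow> (\<lambda>x. \<phi> \<otimes> x \<otimes> inv \<phi>) \<in> hom G G"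
  by (rule homI) (simp_all add: m_assoc, simp add: m_assoc [symmetric])

lemma conjset_generate:
  assumes "S \<subseteq> carrier G" "\<phi> \<in> carrier G"
  shows "conjset G \<phi> (generate G S) = generate G (conjset G \<phi> S)"
proof -
  interpret conj: group_hom G G "\<lambda>x. \<phi> \<otimes> x \<otimes> inv \<phi>"
    by (simp add: group_hom_axioms_def group_hom_def conj_hom assms(2))
  show ?thesis unfolding conjset_def using conj.generate_img[OF assms(1)] by simp
qed

lemma conjset_generate_subset_centralizer:
  assumes S: "S \<subseteq> carrier G" and \<phi>: "\<phi> \<in> carrier G"
    and commute: "conjset G \<phi> S \<subseteq> centralizer G S"
  shows "conjset G \<phi> (generate G S) \<subseteq> centralizer G (generate G S)"
proof -
  have "conjset G \<phi> S \<subseteq> carrier G" using S \<phi> by (auto simp: conjset_def)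
  then show ?thesis
    using generate_subset_centralizer_generate[OF _ S commute] conjset_generate[OF S \<phi>] by simp
qed

lemma conj_prod_in_generate:
  assumes "\<forall>(g, h)\<in>set ps. g \<in> carrier G \<and> h \<in> H"
  shows "conj_prod G ps \<in> generate G (\<Union>g\<in>fst ` set ps. conjset G g H)"
  using assms
proof (induction ps)
  case Nil
  then show ?case by (simp add: generate.one)
next
  case (Cons p ps)
  obtain g h where p: "p = (g, h)" by (cases p)
  have "g \<otimes> h \<otimes> inv g \<in> generate G (\<Union>g\<in>fst ` set (p # ps). conjset G g H)"
    using Cons.prems by (intro generate.incl) (auto simp: p conjset_def)
  moreover have "conj_prod G ps \<in> generate G (\<Union>g\<in>fst ` set (p # ps). conjset G g H)"
    using Cons by (auto intro: mono_generate [THEN subsetD, rotated])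
  ultimately show ?case by (simp add: p generate.eng)
qed

lemma FM_pair_finite_subset_generate:
  assumes "FM_pair G H" "finite A" "A \<subseteq> carrier G"
  shows "\<exists>cs. set cs \<subseteq> carrier G \<and> A \<subseteq> generate G (\<Union>c\<in>set cs. conjset G c H)"
  using assms(2,3)
proof (induction A rule: finite_induct)
  case empty
  show ?case by (intro exI [of _ "[]"]) simp
next
  case (insert x A)
  then have x: "x \<in> carrier G" and A: "A \<subseteq> carrier G" by simp_all
  obtain cs where cs: "set cs \<subseteq> carrier G" "A \<subseteq> generate G (\<Union>c\<in>set cs. conjset G c H)"
    using insert.IH [OF A] by (elim exE conjE)
  have "nu_H G H x < \<infinity>" using assms(1) x by (simp add: FM_pair_def)
  obtain ps where ps: "\<forall>(g, h)\<in>set ps. g \<in> carrier G \<and> h \<in> H" "x = conj_prod G ps"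
    using nu_H_finite_conj_prod [OF \<open>nu_H G H x < \<infinity>\<close>] by (elim exE conjE)
  let ?cs = "map fst ps @ cs"
  have "x \<in> generate G (\<Union>c\<in>set ?cs. conjset G c H)"
    using conj_prod_in_generate [OF ps(1)] ps(2) by (auto intro: mono_generate [THEN subsetD, rotated])
  moreover have "A \<subseteq> generate G (\<Union>c\<in>set ?cs. conjset G c H)"
    using cs(2) mono_generate [of "\<Union>c\<in>set cs. conjset G c H" "\<Union>c\<in>set ?cs. conjset G c H"]
    by auto
  moreover have "set ?cs \<subseteq> carrier G" using cs(1) ps(1) by auto
  ultimately show ?case by blast
qed

end

locale pseudo_normed_group = group G for G :: "('a, 'b) monoid_scheme" (structure) +
  fixes \<nu> :: "'a \<Rightarrow> real"
  assumes pseudo_norm: "conj_inv_pseudo_norm G \<nu>"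
begin

lemma pseudo_norm_mult_le: "x \<in> carrier G \<Longrightarrow> y \<in> carrier G \<Longrightarrow> \<nu> (x \<otimes> y) \<le> \<nu> x + \<nu> y"
  using pseudo_norm unfolding conj_inv_pseudo_norm_def by blast

lemma pseudo_norm_inv: "x \<in> carrier G \<Longrightarrow> \<nu> (inv x) = \<nu> x"
  using pseudo_norm unfolding conj_inv_pseudo_norm_def by metis

lemma pseudo_norm_conj: "x \<in> carrier G \<Longrightarrow> y \<in> carrier G \<Longrightarrow> \<nu> (y \<otimes> x \<otimes> inv y) = \<nu> x"
  using pseudo_norm unfolding conj_inv_pseudo_norm_def by blast

lemma pseudo_norm_commutator_le_left:
  assumes "x \<in> carrier G" "y \<in> carrier G"
  shows "\<nu> (commutator G x y) \<le> 2 * \<nu> x"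
proof -
  have "commutator G x y = x \<otimes> (y \<otimes> inv x \<otimes> inv y)"
    using assms by (simp add: commutator_def m_assoc)
  also have "\<nu> \<dots> \<le> \<nu> x + \<nu> (y \<otimes> inv x \<otimes> inv y)"
    using assms by (simp add: pseudo_norm_mult_le)
  also have "\<dots> = 2 * \<nu> x"
    using assms by (simp add: pseudo_norm_conj pseudo_norm_inv)
  finally show ?thesis .
qed

lemma pseudo_norm_commutator_le_right:
  assumes "x \<in> carrier G" "y \<in> carrier G"
  shows "\<nu> (commutator G x y) \<le> 2 * \<nu> y"
proof -
  have "\<nu> (commutator G x y) \<le> \<nu> (x \<otimes> y \<otimes> inv x) + \<nu> (inv y)"
    using assms by (simp add: commutator_def pseudo_norm_mult_le)
  also have "\<dots> = 2 * \<nu> y"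
    using assms by (simp add: pseudo_norm_conj pseudo_norm_inv)
  finally show ?thesis .
qed

text \<open>If \<open>\<phi> a\<inverse> \<phi>\<inverse>\<close> commutes with \<open>b\<close>, then \<open>[a, b] = [[a, \<phi>], b]\<close>.\<close>

lemma pseudo_norm_commutator_le_conj_commute:
  assumes a: "a \<in> carrier G" and b: "b \<in> carrier G" and \<phi>: "\<phi> \<in> carrier G"
    and commute: "\<phi> \<otimes> inv a \<otimes> inv \<phi> \<otimes> b = b \<otimes> (\<phi> \<otimes> inv a \<otimes> inv \<phi>)"
  shows "\<nu> (commutator G a b) \<le> 4 * \<nu> \<phi>"
proof -
  define c where "c = \<phi> \<otimes> inv a \<otimes> inv \<phi>"
  have c: "c \<in> carrier G" using a \<phi> by (simp add: c_def)
  have cb: "c \<otimes> b = b \<otimes> c" using commute by (simp add: c_def)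
  have "commutator G (a \<otimes> c) b = a \<otimes> (c \<otimes> b) \<otimes> inv c \<otimes> inv a \<otimes> inv b"
    using a b c by (simp add: commutator_def inv_mult_group m_assoc)
  also have "\<dots> = commutator G a b"
    using a b c by (simp add: cb commutator_def m_assoc)
  finally have ab: "commutator G a b = commutator G (commutator G a \<phi>) b"
    using a \<phi> by (simp add: commutator_def c_def m_assoc)
  have "\<nu> (commutator G a b) \<le> 2 * \<nu> (commutator G a \<phi>)"
    unfolding ab using a b \<phi> by (intro pseudo_norm_commutator_le_left) (simp_all add: commutator_def)
  also have "\<dots> \<le> 4 * \<nu> \<phi>"
    using pseudo_norm_commutator_le_right[OF a \<phi>] by simp
  finally show ?thesis .
qed

lemma pseudo_norm_swap_diff_le:
  assumes x: "x \<in> carrier G" and y: "y \<in> carrier G" and w: "w \<in> carrier G"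
  shows "\<bar>\<nu> (x \<otimes> y \<otimes> w) - \<nu> (y \<otimes> x \<otimes> w)\<bar> \<le> \<nu> (commutator G x y)"
proof -
  define c where "c = commutator G x y"
  have c: "c \<in> carrier G" using x y by (simp add: c_def commutator_def)
  have "x \<otimes> y \<otimes> w = c \<otimes> (y \<otimes> x \<otimes> w)"
    using x y w by (simp add: c_def commutator_def m_assoc) (simp add: m_assoc [symmetric])
  hence "\<nu> (x \<otimes> y \<otimes> w) \<le> \<nu> c + \<nu> (y \<otimes> x \<otimes> w)"
    using x y w c by (simp add: pseudo_norm_mult_le)
  moreover have "y \<otimes> x \<otimes> w = inv c \<otimes> (x \<otimes> y \<otimes> w)"
    using x y w
    by (simp add: c_def commutator_def inv_mult_group m_assoc) (simp add: m_assoc [symmetric])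
  hence "\<nu> (y \<otimes> x \<otimes> w) \<le> \<nu> c + \<nu> (x \<otimes> y \<otimes> w)"
    using pseudo_norm_mult_le[of "inv c" "x \<otimes> y \<otimes> w"] pseudo_norm_inv[OF c] x y w c by simp
  ultimately show ?thesis by (simp add: c_def abs_le_iff)
qed

lemma pseudo_norm_commutator_generate_le:
  assumes S: "S \<subseteq> carrier G" and \<phi>: "\<phi> \<in> carrier G"
    and commute: "conjset G \<phi> S \<subseteq> centralizer G S"
    and a: "a \<in> generate G S" and b: "b \<in> generate G S"
  shows "\<nu> (commutator G a b) \<le> 4 * \<nu> \<phi>"
proof -
  have "\<phi> \<otimes> inv a \<otimes> inv \<phi> \<in> centralizer G (generate G S)"
    using conjset_generate_subset_centralizer[OF S \<phi> commute] generate_m_inv_closed[OF S a]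
    by (auto simp: conjset_def)
  then show ?thesis
    using generate_in_carrier[OF S] a b \<phi>
    by (intro pseudo_norm_commutator_le_conj_commute) (auto simp: centralizer_def)
qed

lemma FM_pair_commutator_bounded:
  assumes FM: "FM_pair G H" and A: "finite A" "A \<subseteq> carrier G"
  shows "\<exists>C. \<forall>a\<in>generate G A. \<forall>b\<in>generate G A. \<nu> (commutator G a b) \<le> C"
proof -
  obtain cs where cs: "set cs \<subseteq> carrier G" and A_S: "A \<subseteq> generate G (\<Union>c\<in>set cs. conjset G c H)"
    using FM_pair_finite_subset_generate [OF FM A] by blast
  define S where "S = (\<Union>c\<in>set cs. conjset G c H)"
  have S: "S \<subseteq> carrier G"
    using cs subgroup.subset [of H G] FM by (auto simp: S_def conjset_def FM_pair_def)
  obtain h0 where "h0 \<in> Df_H G H S"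
    using FM cs unfolding FM_pair_def S_def by blast
  then obtain h where h: "h \<in> carrier G" and h0: "h0 \<in> carrier G"
    and commute: "\<forall>x\<in>conjset G (h \<otimes> h0 \<otimes> inv h) S. \<forall>y\<in>S. x \<otimes> y = y \<otimes> x"
    using cs unfolding Df_H_def S_def by blast
  define \<phi> where "\<phi> = h \<otimes> h0 \<otimes> inv h"
  have \<phi>: "\<phi> \<in> carrier G" using h h0 by (simp add: \<phi>_def)
  have "conjset G \<phi> S \<subseteq> centralizer G S"
    using commute S \<phi> by (auto simp: \<phi>_def [symmetric] centralizer_def conjset_def)
  moreover have "generate G A \<subseteq> generate G S"
    using generate_subgroup_incl [OF A_S [folded S_def] generate_is_subgroup [OF S]] .
  ultimately show ?thesis
    using pseudo_norm_commutator_generate_le [OF S \<phi>] by blast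
qed

lemma word_norm_append_swap:
  assumes f: "f \<in> words G" and g: "g \<in> words G" and w: "w \<in> words G"
    and bound: "\<And>n. \<nu> (commutator G (word_eval G f n) (word_eval G g n)) \<le> C"
  shows "word_norm G \<nu> ((f @ g) @ w) = word_norm G \<nu> ((g @ f) @ w)"
  unfolding word_norm_def
proof (rule lim_div_real_eq_of_bounded_diff)
  fix n
  show "\<bar>\<nu> (word_eval G ((f @ g) @ w) n) - \<nu> (word_eval G ((g @ f) @ w) n)\<bar> \<le> C"
    using pseudo_norm_swap_diff_le [OF word_eval_closed [OF f, of n] word_eval_closed [OF g, of n]
        word_eval_closed [OF w, of n]] bound [of n] f g w
    by (simp add: word_eval_append words_append word_eval_closed m_assoc)
qed

end

theorem lemma3p5:
  fixes G :: "('a, 'b) monoid_scheme" and \<nu> :: "'a \<Rightarrow> real"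
  assumes "group G" and "FM G" and "conj_inv_pseudo_norm G \<nu>"
    and "f \<in> words G" and "g \<in> words G"
  shows "A_class G \<nu> (f @ g) = A_class G \<nu> (g @ f)"
proof -
  interpret pseudo_normed_group G \<nu>
    using assms(1,3) by (rule pseudo_normed_group.intro [OF _ pseudo_normed_group_axioms.intro])
  obtain H where H: "FM_pair G H" using assms(2) by (auto simp: FM_def)
  define A where "A = fst ` set (f @ g)"
  have A: "finite A" "A \<subseteq> carrier G" using assms(4,5) by (auto simp: A_def words_def)
  obtain C where C: "\<forall>a\<in>generate G A. \<forall>b\<in>generate G A. \<nu> (commutator G a b) \<le> C"
    using FM_pair_commutator_bounded [OF H A] by blast
  have "word_eval G u n \<in> generate G A" if "u \<in> {f, g}" for u n
    using that A(2)
    by (intro word_eval_in_subgroup generate_is_subgroup) (auto simp: A_def intro: generate.incl)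
  then have "word_norm G \<nu> ((f @ g) @ word_bar v) = word_norm G \<nu> ((g @ f) @ word_bar v)"
    if "v \<in> words G" for v
    using C that assms(4,5) by (intro word_norm_append_swap [where C = C] words_bar) auto
  then show ?thesis by (auto simp: A_class_def word_sim_def)
qed

end
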